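(* Let $n\in\mathbb{N}$, $0<\beta\le n$, $b\in\operatorname{BMO}^\beta(\mathbb{R}^n)$ and $k>0$. Define $b_k(x)=k$ if $b(x)>k$, $b_k(x)=b(x)$ if $-k\le b(x)\le k$, and $b_k(x)=-k$ if $b(x)<-k$. Then there exists a constant $C_\beta>0$, depending only on $\beta$, such that $\|b_k\|_{\operatorname{BMO}^\beta(\mathbb{R}^n)}\le C_\beta\|b\|_{\operatorname{BMO}^\beta(\mathbb{R}^n)}$.
   Context: $\mathcal{H}^\beta_\infty(E)=\inf\{\sum_i\omega_\beta r_i^\beta:E\subset\bigcup_iB(x_i,r_i)\}$, $\omega_\beta=\pi^{\beta/2}/\Gamma(\beta/2+1)$; integrals against $\mathcal{H}^\beta_\infty$ are Choquet integrals $\int_\Omega h\,d\mathcal{H}^\beta_\infty=\int_0^\infty\mathcal{H}^\beta_\infty(\{x\in\Omega:h>t\})\,dt$. Cubes are axis-parallel with side length $\ell(Q)$. $\|f\|_{\operatorname{BMO}^\beta(\mathbb{R}^n)}=\sup_Q\inf_{c\in\mathbb{R}}\ell(Q)^{-\beta}\int_Q|f-c|\,d\mathcal{H}^\beta_\infty$, and $\operatorname{BMO}^\beta(\mathbb{R}^n)$ is the space of functions with finite such quantity. *)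

theory Defs
  imports "HOL-Analysis.Analysis"
begin

text \<open>Points of R^n are represented as functions nat \<Rightarrow> real vanishing at
  indices \<ge> n, so that the dimension n is an ordinary variable and can be
  quantified after the constant.\<close>

definition Rn :: "nat \<Rightarrow> (nat \<Rightarrow> real) set" where
  "Rn n = {x. \<forall>i\<ge>n. x i = 0}"

definition distn :: "nat \<Rightarrow> (nat \<Rightarrow> real) \<Rightarrow> (nat \<Rightarrow> real) \<Rightarrow> real" where
  "distn n x y = sqrt (\<Sum>i<n. (x i - y i)\<^sup>2)"

definition balln :: "nat \<Rightarrow> (nat \<Rightarrow> real) \<Rightarrow> real \<Rightarrow> (nat \<Rightarrow> real) set" where
  "balln n x r = {y \<in> Rn n. distn n x y < r}"

definition omega :: "real \<Rightarrow> real" where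
  "omega \<beta> = pi powr (\<beta> / 2) / Gamma (\<beta> / 2 + 1)"

definition hcontent :: "nat \<Rightarrow> real \<Rightarrow> (nat \<Rightarrow> real) set \<Rightarrow> ennreal" where
  "hcontent n \<beta> E = (INF (c, r) \<in> {(c :: nat \<Rightarrow> nat \<Rightarrow> real, r :: nat \<Rightarrow> real).
       (\<forall>i. c i \<in> Rn n \<and> r i \<ge> 0) \<and> E \<subseteq> (\<Union>i. balln n (c i) (r i))}.
     \<Sum>i. ennreal (omega \<beta> * r i powr \<beta>))"

definition choquet :: "nat \<Rightarrow> real \<Rightarrow> (nat \<Rightarrow> real) set \<Rightarrow> ((nat \<Rightarrow> real) \<Rightarrow> real) \<Rightarrow> ennreal" where
  "choquet n \<beta> \<Omega> h = (\<integral>\<^sup>+ t. indicator {0..} t * hcontent n \<beta> {x \<in> \<Omega>. h x > t} \<partial>lborel)"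

definition cube :: "nat \<Rightarrow> (nat \<Rightarrow> real) \<Rightarrow> real \<Rightarrow> (nat \<Rightarrow> real) set" where
  "cube n a l = {y \<in> Rn n. \<forall>i<n. a i \<le> y i \<and> y i \<le> a i + l}"

definition bmo_norm :: "nat \<Rightarrow> real \<Rightarrow> ((nat \<Rightarrow> real) \<Rightarrow> real) \<Rightarrow> ennreal" where
  "bmo_norm n \<beta> f = (SUP (a, l) \<in> {(a, l). a \<in> Rn n \<and> l > 0}.
      INF c \<in> (UNIV :: real set).
        ennreal (l powr (- \<beta>)) * choquet n \<beta> (cube n a l) (\<lambda>x. \<bar>f x - c\<bar>))"

definition in_BMO :: "nat \<Rightarrow> real \<Rightarrow> ((nat \<Rightarrow> real) \<Rightarrow> real) \<Rightarrow> bool" where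
  "in_BMO n \<beta> f \<longleftrightarrow> bmo_norm n \<beta> f < \<infinity>"

definition truncate :: "real \<Rightarrow> ((nat \<Rightarrow> real) \<Rightarrow> real) \<Rightarrow> (nat \<Rightarrow> real) \<Rightarrow> real" where
  "truncate k b x = (if b x > k then k else if b x < - k then - k else b x)"

end

theory Submission
  imports Defs
begin

text \<open>Truncation at height k is a contraction of the real line, and composing with a contraction
  \<phi> cannot increase any mean oscillation: on every cube, the constant c may be replaced by \<phi> c,
  and the Choquet integral is monotone in the integrand. Hence the theorem holds with C = 1.\<close>

lemma hcontent_mono: "E \<subseteq> F \<Longrightarrow> hcontent n \<beta> E \<le> hcontent n \<beta> F"
  unfolding hcontent_def by (rule INF_superset_mono) auto

lemma choquet_mono:
  assumes "\<And>x. x \<in> \<Omega> \<Longrightarrow> h x \<le> g x"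
  shows "choquet n \<beta> \<Omega> h \<le> choquet n \<beta> \<Omega> g"
  unfolding choquet_def
proof (rule nn_integral_mono)
  fix t
  have "{x \<in> \<Omega>. h x > t} \<subseteq> {x \<in> \<Omega>. g x > t}"
    using assms by fastforce
  then show "indicator {0..} t * hcontent n \<beta> {x \<in> \<Omega>. h x > t}
      \<le> indicator {0..} t * hcontent n \<beta> {x \<in> \<Omega>. g x > t}"
    by (intro mult_left_mono hcontent_mono) auto
qed

lemma bmo_norm_comp_contraction:
  assumes contraction: "\<And>s t. \<bar>\<phi> s - \<phi> t\<bar> \<le> \<bar>s - t\<bar>"
  shows "bmo_norm n \<beta> (\<lambda>x. \<phi> (f x)) \<le> bmo_norm n \<beta> f"
  unfolding bmo_norm_def
proof (rule SUP_mono', unfold split_paired_all case_prod_conv)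
  fix a and l :: real
  show "(INF c. ennreal (l powr - \<beta>) * choquet n \<beta> (cube n a l) (\<lambda>x. \<bar>\<phi> (f x) - c\<bar>))
      \<le> (INF c. ennreal (l powr - \<beta>) * choquet n \<beta> (cube n a l) (\<lambda>x. \<bar>f x - c\<bar>))"
  proof (rule INF_mono)
    fix c :: real
    have "choquet n \<beta> (cube n a l) (\<lambda>x. \<bar>\<phi> (f x) - \<phi> c\<bar>)
        \<le> choquet n \<beta> (cube n a l) (\<lambda>x. \<bar>f x - c\<bar>)"
      by (rule choquet_mono) (rule contraction)
    then show "\<exists>c'\<in>UNIV. ennreal (l powr - \<beta>) * choquet n \<beta> (cube n a l) (\<lambda>x. \<bar>\<phi> (f x) - c'\<bar>)
        \<le> ennreal (l powr - \<beta>) * choquet n \<beta> (cube n a l) (\<lambda>x. \<bar>f x - c\<bar>)"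
      by (intro bexI[of _ "\<phi> c"] mult_left_mono) auto
  qed
qed

lemma truncate_eq_clamp: "k \<ge> 0 \<Longrightarrow> truncate k b = (\<lambda>x. max (- k) (min k (b x)))"
  unfolding truncate_def by auto

lemma clamp_contraction: "\<bar>max (- k) (min k s) - max (- k) (min k t)\<bar> \<le> \<bar>s - t\<bar>"
  for k s t :: real
  by (auto simp: max_def min_def)

lemma bmo_norm_truncate_le:
  "k \<ge> 0 \<Longrightarrow> bmo_norm n \<beta> (truncate k b) \<le> bmo_norm n \<beta> b"
  unfolding truncate_eq_clamp by (rule bmo_norm_comp_contraction[OF clamp_contraction])

theorem lemma2p11:
  fixes \<beta> :: real
  assumes "\<beta> > 0"
  shows "\<exists>C > 0. \<forall>(n :: nat) (b :: (nat \<Rightarrow> real) \<Rightarrow> real) (k :: real).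
           \<beta> \<le> real n \<longrightarrow> in_BMO n \<beta> b \<longrightarrow> k > 0 \<longrightarrow>
           bmo_norm n \<beta> (truncate k b) \<le> ennreal C * bmo_norm n \<beta> b"
  by (intro exI[of _ 1]) (simp add: bmo_norm_truncate_le)

end
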